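(* Let $d$ be odd, let $c_1\ge\cdots\ge c_u$ be odd positive integers with $c_1\le d$, and let $H=H_d(c_1,\dots,c_u)=C_d(A(0,c_1,\dots,c_u,1))$. Let $P$ be the first summit and $Q$ the last summit of $H$. If $u=0$, then $H$ has exactly $d$ summits, $\operatorname{char}P=(0,1)$ and $\operatorname{char}Q=(0,d)$. If $u\ge1$, let $t=\tfrac12(d-c_1)$; then $t\ge0$, $H$ has exactly $(u+2)t+1$ summits, $\operatorname{char}P=(0,c_1,\dots,c_u,1)$ and $\operatorname{char}Q=(0,c_1+2t,\dots,c_u+2t,1+2t)$.
   Context: Conventions: $k$ a field; linear Nakayama algebras are basic $kQ/I$ with $Q$ a linearly oriented path; modules are finitely generated left modules, indecomposables uniserial; $|M|$ length, $\operatorname{pd}$ projective dimension, $\tau$ Auslander–Reiten translation. Simples $S_1,\dots,S_n$ with $\tau S_i=S_{i-1}$; $\omega_A=S_n$ the simple injective. Even/odd indecomposable: parity of projective dimension. For indecomposable $M$ with composition factors $F_1=\operatorname{soc}M,\dots,F_m=\operatorname{top}M$, $\operatorname{char}M=(z_1,\dots,z_m)$ with $z_i=\operatorname{pd}F_i$ if $F_i$ odd, $z_i=\operatorname{pd}M$ if $F_i$ even. Height = maximal length of indecomposables; summits = indecomposables of maximal length. Concave: Kupisch series weakly increases then weakly decreases. For concave $A$: first summit = summit $P$ with $\operatorname{rad}P$ projective; last summit = summit $Q$ with $Q/\operatorname{soc}Q$ injective. $A(\mathbf z)$ (ascent algebra): for a projective characteristic sequence $\mathbf z$ (non-negative integers,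 exactly one even entry, equal to $0$), the unique ascending (weakly increasing Kupisch series) linear Nakayama algebra with $\operatorname{char}P(\omega_{A(\mathbf z)})=\mathbf z$. $C_d$ (partial $d$-closure): a simple $S$ is $d$-closed if torsionless or the socle of a module of projective dimension $\ge d$; the $d$-cliff module $Y_A=P(\omega_A)/U$ with $U$ the largest submodule of $P(\omega_A)$ with all composition factors $d$-closed; $E_d(A)$ is the one-point extension adding a simple $T=\tau^-\omega_A$ with $\operatorname{rad}P(T)\cong Y_A$ (or $A$ itself if $Y_A=0$); $C_d(A)=E_d^t(A)$ for $t$ with zero $d$-cliff module. *)

theory Defs
  imports Main
begin

text \<open>
Combinatorial model of linear Nakayama algebras (0-based vertices).
A linear Nakayama algebra with n simples is encoded by its Kupisch series
K = [c_0, ..., c_{n-1}] where c_b = length of P(S_b).  S_0 is the simple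
projective, S_{n-1} = omega is the simple injective, tau S_i = S_{i-1}.
The indecomposable (uniserial) modules are the intervals [a,b] with socle S_a,
top S_b and composition factors S_a, S_{a+1}, ..., S_b (socle to top),
subject to b + 1 - a \<le> c_b.  The projective cover of [a,b] is
P(S_b) = [b+1-c_b, b] and its syzygy is [b+1-c_b, a-1].
\<close>

definition kupisch :: "nat list \<Rightarrow> bool" where
  "kupisch K \<longleftrightarrow> K \<noteq> [] \<and> K ! 0 = 1 \<and>
     (\<forall>i. 0 < i \<and> i < length K \<longrightarrow> 2 \<le> K ! i \<and> K ! i \<le> K ! (i - 1) + 1)"

definition ismod :: "nat list \<Rightarrow> nat \<Rightarrow> nat \<Rightarrow> bool" where
  "ismod K a b \<longleftrightarrow> a \<le> b \<and> b < length K \<and> b + 1 - a \<le> K ! b"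

definition len :: "nat \<Rightarrow> nat \<Rightarrow> nat" where
  "len a b = b + 1 - a"

definition isproj :: "nat list \<Rightarrow> nat \<Rightarrow> nat \<Rightarrow> bool" where
  "isproj K a b \<longleftrightarrow> ismod K a b \<and> b + 1 - a = K ! b"

text \<open>An indecomposable is injective iff it is the longest uniserial with its socle.\<close>
definition isinj :: "nat list \<Rightarrow> nat \<Rightarrow> nat \<Rightarrow> bool" where
  "isinj K a b \<longleftrightarrow> ismod K a b \<and> \<not> ismod K a (b + 1)"

text \<open>Projective dimension of the indecomposable [a,b] (junk 0 outside modules).\<close>
function pd :: "nat list \<Rightarrow> nat \<Rightarrow> nat \<Rightarrow> nat" where
  "pd K a b = (if \<not> ismod K a b \<or> a = 0 \<or> b + 1 - a = K ! b then 0
               else Suc (pd K (b + 1 - K ! b) (a - 1)))"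
  by pat_completeness auto
termination
  by (relation "measure (\<lambda>(K, a, b). b)") (auto simp: ismod_def)

definition charm :: "nat list \<Rightarrow> nat \<Rightarrow> nat \<Rightarrow> nat list" where
  "charm K a b = map (\<lambda>i. if odd (pd K i i) then pd K i i else pd K a b) [a..<Suc b]"

definition height :: "nat list \<Rightarrow> nat" where
  "height K = Max {len a b | a b. ismod K a b}"

definition summit :: "nat list \<Rightarrow> nat \<Rightarrow> nat \<Rightarrow> bool" where
  "summit K a b \<longleftrightarrow> ismod K a b \<and> len a b = height K"

definition summits :: "nat list \<Rightarrow> (nat \<times> nat) set" where
  "summits K = {(a, b). summit K a b}"

text \<open>First summit: summit whose radical [a,b-1] is projective (zero if a = b).\<close>
definition first_summit :: "nat list \<Rightarrow> nat \<times> nat \<Rightarrow> bool" where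
  "first_summit K p \<longleftrightarrow> summit K (fst p) (snd p) \<and>
     (fst p = snd p \<or> isproj K (fst p) (snd p - 1))"

text \<open>Last summit: summit Q with Q / soc Q = [a+1,b] injective (zero if a = b).\<close>
definition last_summit :: "nat list \<Rightarrow> nat \<times> nat \<Rightarrow> bool" where
  "last_summit K p \<longleftrightarrow> summit K (fst p) (snd p) \<and>
     (fst p = snd p \<or> isinj K (fst p + 1) (snd p))"

definition ascending :: "nat list \<Rightarrow> bool" where
  "ascending K \<longleftrightarrow> kupisch K \<and> sorted K"

text \<open>P(omega) = [length K - K!(length K - 1), length K - 1].\<close>
definition omega_char :: "nat list \<Rightarrow> nat list" where
  "omega_char K = charm K (length K - K ! (length K - 1)) (length K - 1)"

definition ascent :: "nat list \<Rightarrow> nat list" where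
  "ascent z = (THE K. ascending K \<and> omega_char K = z)"

text \<open>d-closed simple S_i: torsionless (socle of an indecomposable projective) or
  the socle of an (indecomposable) module of projective dimension \<ge> d.\<close>
definition torsionless :: "nat list \<Rightarrow> nat \<Rightarrow> bool" where
  "torsionless K i \<longleftrightarrow> (\<exists>b. isproj K i b)"

definition dclosed :: "nat list \<Rightarrow> nat \<Rightarrow> nat \<Rightarrow> bool" where
  "dclosed K d i \<longleftrightarrow> torsionless K i \<or> (\<exists>b. ismod K i b \<and> d \<le> pd K i b)"

text \<open>Length of the largest submodule U of P(omega) all of whose composition
  factors are d-closed (submodules of P(omega) = [s, n-1] are [s, s+m-1]).\<close>
definition ulen :: "nat list \<Rightarrow> nat \<Rightarrow> nat" where
  "ulen K d = (GREATEST m. m \<le> K ! (length K - 1) \<and>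
       (\<forall>i<m. dclosed K d (length K - K ! (length K - 1) + i)))"

text \<open>Length of the d-cliff module Y = P(omega)/U.\<close>
definition cliff_len :: "nat list \<Rightarrow> nat \<Rightarrow> nat" where
  "cliff_len K d = K ! (length K - 1) - ulen K d"

text \<open>One-point extension E_d: new vertex T with rad P(T) = Y, so |P(T)| = |Y| + 1.\<close>
definition Ed :: "nat \<Rightarrow> nat list \<Rightarrow> nat list" where
  "Ed d K = (if cliff_len K d = 0 then K else K @ [cliff_len K d + 1])"

definition Cd :: "nat \<Rightarrow> nat list \<Rightarrow> nat list" where
  "Cd d K = (Ed d ^^ (LEAST t. cliff_len ((Ed d ^^ t) K) d = 0)) K"

definition Hd :: "nat \<Rightarrow> nat list \<Rightarrow> nat list" where
  "Hd d cs = Cd d (ascent (0 # cs @ [1]))"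

end

theory Submission
  imports Defs
begin

text \<open>
  The ascent algebra \<open>A = A(0, c\<^sub>1, \<dots>, c\<^sub>u, 1)\<close> arises from \<open>[1]\<close> by two moves: appending one
  vertex appends an entry \<open>1\<close> to the characteristic of \<open>P(\<omega>)\<close>, and appending \<open>|P(\<omega>)|\<close> vertices of
  Kupisch length \<open>|P(\<omega>)|\<close> adds \<open>2\<close> to every entry; an ascending algebra is determined by that
  characteristic. Put \<open>h = u + 2 = |P(\<omega>)|\<close>. The closure then appends vertices of Kupisch length \<open>h\<close>:
  while fewer than \<open>h t\<close> have been added, the simple above the socle of \<open>P(\<omega>)\<close> is neither torsionless
  nor the socle of a module of projective dimension \<open>\<ge> d\<close>, because each period of the constant tail
  raises projective dimensions by exactly \<open>2\<close>, starting from at most \<open>c\<^sub>1 + 1\<close>. After \<open>h t\<close> steps that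
  simple has projective dimension \<open>c\<^sub>1 + 2t = d\<close>, so all later vertices are shorter. Hence the summits
  of \<open>H\<close> are the \<open>h t + 1\<close> projectives of length \<open>h\<close>: the first is \<open>P(\<omega>)\<close> of \<open>A\<close>, the last is its
  translate by \<open>h t\<close> vertices, whose simples have projective dimension larger by \<open>2t\<close>.
\<close>

declare pd.simps[simp del]

section \<open>Kupisch series\<close>

lemma kupisch_nth_Suc:
  "kupisch K \<Longrightarrow> Suc i < length K \<Longrightarrow> 2 \<le> K ! Suc i \<and> K ! Suc i \<le> K ! i + 1"
  unfolding kupisch_def by (metis diff_Suc_1 zero_less_Suc)

lemma kupisch_nth_ge_2: "kupisch K \<Longrightarrow> 0 < i \<Longrightarrow> i < length K \<Longrightarrow> 2 \<le> K ! i"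
  unfolding kupisch_def by blast

lemma kupisch_nth_bounds: "kupisch K \<Longrightarrow> i < length K \<Longrightarrow> 1 \<le> K ! i \<and> K ! i \<le> Suc i"
proof (induction i)
  case 0
  then show ?case by (simp add: kupisch_def)
next
  case (Suc i)
  then show ?case using kupisch_nth_Suc[OF Suc.prems] by auto
qed

lemma kupisch_length_pos: "kupisch K \<Longrightarrow> 0 < length K"
  by (simp add: kupisch_def)

lemma kupisch_last_le_length: "kupisch K \<Longrightarrow> K ! (length K - 1) \<le> length K"
  using kupisch_nth_bounds[of K "length K - 1"] kupisch_length_pos[of K] by simp

lemma kupisch_snoc:
  "kupisch K \<Longrightarrow> 2 \<le> x \<Longrightarrow> x \<le> K ! (length K - 1) + 1 \<Longrightarrow> kupisch (K @ [x])"
  unfolding kupisch_def by (auto simp: nth_append) (metis One_nat_def Suc_pred less_antisym)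

lemma kupisch_butlast:
  assumes "kupisch K" "2 \<le> length K" shows "kupisch (butlast K)"
proof -
  have "butlast K \<noteq> []" using assms(2) by (cases K rule: rev_cases) auto
  then show ?thesis using assms unfolding kupisch_def by (auto simp: nth_butlast)
qed

text \<open>\<open>Suc j - K ! j\<close> is the socle of the projective \<open>P(S\<^sub>j)\<close>.\<close>
lemma kupisch_proj_socle_mono:
  assumes "kupisch K" "i \<le> j" "j < length K"
  shows "Suc i - K ! i \<le> Suc j - K ! j"
  using assms(2,3)
proof (induction j)
  case (Suc j)
  show ?case
  proof (cases "i = Suc j")
    case False
    then have "Suc i - K ! i \<le> Suc j - K ! j" using Suc by auto
    moreover have "K ! Suc j \<le> K ! j + 1" using kupisch_nth_Suc[OF assms(1)] Suc.prems by auto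
    ultimately show ?thesis by linarith
  qed simp
qed simp

lemma nth_append_replicate_last:
  assumes "K \<noteq> []" "length K - 1 \<le> i" "i < length K + r"
  shows "(K @ replicate r (K ! (length K - 1))) ! i = K ! (length K - 1)"
proof (cases "i < length K")
  case True
  then have "i = length K - 1" using assms(2) by linarith
  then show ?thesis using assms(1) by (simp add: nth_append)
qed (use assms(3) in \<open>simp add: nth_append\<close>)

lemma last_append_replicate_last:
  "K \<noteq> [] \<Longrightarrow> (K @ replicate r (K ! (length K - 1))) ! (length (K @ replicate r (K ! (length K - 1))) - 1)
     = K ! (length K - 1)"
  by (rule nth_append_replicate_last) auto

lemma kupisch_append_replicate_last:
  assumes "kupisch K" "2 \<le> K ! (length K - 1)"
  shows "kupisch (K @ replicate r (K ! (length K - 1)))"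
proof (induction r)
  case (Suc r)
  have "K @ replicate (Suc r) (K ! (length K - 1)) = (K @ replicate r (K ! (length K - 1))) @ [K ! (length K - 1)]"
    by (simp add: replicate_append_same[symmetric])
  also have "kupisch \<dots>"
    using kupisch_snoc[OF Suc.IH assms(2)] last_append_replicate_last[of K r] kupisch_length_pos[OF assms(1)]
    by (simp add: add.commute)
  finally show ?case .
qed (use assms in simp)

section \<open>Projective dimension\<close>

lemma ismod_append: "b < length K \<Longrightarrow> ismod (K @ X) a b = ismod K a b"
  by (auto simp: ismod_def nth_append)

lemma pd_projective: "ismod K a b \<Longrightarrow> b + 1 - a = K ! b \<Longrightarrow> pd K a b = 0"
  by (subst pd.simps) simp

lemma pd_syzygy:
  "ismod K a b \<Longrightarrow> a \<noteq> 0 \<Longrightarrow> b + 1 - a \<noteq> K ! b \<Longrightarrow> pd K a b = Suc (pd K (b + 1 - K ! b) (a - 1))"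
  by (subst pd.simps) simp

lemma pd_append: "b < length K \<Longrightarrow> pd (K @ X) a b = pd K a b"
proof (induction b arbitrary: a rule: less_induct)
  case (less b)
  show ?case
  proof (cases "\<not> ismod K a b \<or> a = 0 \<or> b + 1 - a = K ! b")
    case True
    then show ?thesis using less.prems by (subst (1 2) pd.simps) (simp add: ismod_append nth_append)
  next
    case False
    then have "a - 1 < b" by (auto simp: ismod_def)
    then show ?thesis using less False
      by (subst (1 2) pd.simps) (simp add: ismod_append nth_append)
  qed
qed

lemma charm_append: "b < length K \<Longrightarrow> charm (K @ X) a b = charm K a b"
  unfolding charm_def by (auto simp: pd_append)

lemma pd_second_syzygy:
  assumes "a \<le> b" "b < length K" "b + 1 - a < l" "K ! b = l" "K ! (a - 1) = l" "l \<le> a"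
  shows "pd K a b = Suc (Suc (pd K (a - l) (b - l)))"
proof -
  have "ismod K a b" "ismod K (b + 1 - l) (a - 1)" using assms by (auto simp: ismod_def)
  then show ?thesis
    using assms pd_syzygy[of K a b] pd_syzygy[of K "b + 1 - l" "a - 1"]
    by (simp add: Suc_diff_le)
qed

lemma pd_append_replicate_simple:
  fixes K :: "nat list" defines "l \<equiv> K ! (length K - 1)"
  assumes K: "kupisch K" and l: "2 \<le> l" and w: "length K - l \<le> w"
  shows "w + q * l < length K + r \<Longrightarrow>
    pd (K @ replicate r l) (w + q * l) (w + q * l) = 2 * q + pd (K @ replicate r l) w w"
proof (induction q)
  case (Suc q)
  let ?G = "K @ replicate r l"
  have "length K - 1 \<le> w + Suc q * l - 1" "w + Suc q * l < length K + r"
    using Suc.prems w by auto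
  then have "?G ! (w + Suc q * l) = l" "?G ! (w + Suc q * l - 1) = l"
    using nth_append_replicate_last[of K] kupisch_length_pos[OF K] unfolding l_def by auto
  then have "pd ?G (w + Suc q * l) (w + Suc q * l) = Suc (Suc (pd ?G (w + q * l) (w + q * l)))"
    using pd_second_syzygy[of "w + Suc q * l" "w + Suc q * l" ?G l] Suc.prems l by simp
  then show ?case using Suc by simp
qed simp

section \<open>Ascending algebras are determined by the characteristic of \<open>P(\<omega>)\<close>\<close>

definition socle_P_omega :: "nat list \<Rightarrow> nat" where
  "socle_P_omega K = length K - K ! (length K - 1)"

definition odd_part :: "nat \<Rightarrow> nat" where
  "odd_part x = (if odd x then x else 0)"

lemma charm_pd_zero: "pd K a b = 0 \<Longrightarrow> charm K a b = map (\<lambda>i. odd_part (pd K i i)) [a..<Suc b]"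
  by (simp add: charm_def odd_part_def)

lemma pd_P_omega: "kupisch K \<Longrightarrow> pd K (socle_P_omega K) (length K - 1) = 0"
  using kupisch_length_pos[of K] kupisch_last_le_length[of K] kupisch_nth_bounds[of K "length K - 1"]
  by (intro pd_projective) (auto simp: ismod_def socle_P_omega_def)

lemma omega_char_eq:
  assumes "kupisch K"
  shows "omega_char K = map (\<lambda>i. odd_part (pd K i i)) [socle_P_omega K..<length K]"
proof -
  have "omega_char K = charm K (socle_P_omega K) (length K - 1)"
    by (simp add: omega_char_def socle_P_omega_def)
  then show ?thesis
    using charm_pd_zero[OF pd_P_omega[OF assms]] kupisch_length_pos[OF assms] by (simp del: upt_Suc)
qed

lemma length_omega_char: "kupisch K \<Longrightarrow> length (omega_char K) = K ! (length K - 1)"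
  using omega_char_eq[of K] kupisch_last_le_length[of K] by (simp add: socle_P_omega_def)

lemma kupisch_last_eq_1_iff: "kupisch K \<Longrightarrow> K ! (length K - 1) = 1 \<longleftrightarrow> K = [1]"
  using kupisch_nth_ge_2[of K "length K - 1"] kupisch_length_pos[of K]
  by (cases "length K = 1") (auto simp: kupisch_def length_Suc_conv)

lemma omega_char_butlast_eq:
  assumes "kupisch K" "2 \<le> length K"
  shows "omega_char (butlast K) =
    map (\<lambda>i. odd_part (pd K i i)) [length K - 1 - K ! (length K - 2)..<length K - 1]"
proof -
  have "K = butlast K @ [last K]" using assms(2) by (cases K rule: rev_cases) auto
  then have "pd (butlast K) i i = pd K i i" if "i < length K - 1" for i
    using pd_append[of i "butlast K" "[last K]"] that by simp
  moreover have "socle_P_omega (butlast K) = length K - 1 - K ! (length K - 2)"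
    using assms(2) by (simp add: socle_P_omega_def nth_butlast numeral_2_eq_2)
  ultimately show ?thesis
    using omega_char_eq[OF kupisch_butlast[OF assms]] by simp
qed

lemma omega_char_rise:
  assumes "ascending K" "2 \<le> length K" "K ! (length K - 1) = K ! (length K - 2) + 1"
  shows "omega_char K = omega_char (butlast K) @ [1]"
proof -
  define n m where "n = length K" and "m = K ! (n - 1)"
  have K: "kupisch K" using assms(1) by (simp add: ascending_def)
  have n: "2 \<le> n" using assms(2) by (simp add: n_def)
  have m: "2 \<le> m" "m \<le> n" "K ! (n - 2) = m - 1" "K ! (n - 1) = m"
    using kupisch_nth_ge_2[OF K, of "n - 1"] kupisch_last_le_length[OF K] assms(2,3)
    by (auto simp: n_def m_def)
  have "pd K (n - m) (n - 2) = 0"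
    using m n by (intro pd_projective) (auto simp: ismod_def n_def)
  moreover have "pd K (n - 1) (n - 1) = Suc (pd K (n - 1 + 1 - m) (n - 1 - 1))"
  proof -
    have "ismod K (n - 1) (n - 1)" "n - 1 \<noteq> 0" "n - 1 + 1 - (n - 1) \<noteq> K ! (n - 1)"
      using m n by (auto simp: ismod_def n_def)
    from pd_syzygy[OF this] show ?thesis unfolding m(4) .
  qed
  moreover have "n - 1 + 1 - m = n - m" "n - 1 - 1 = n - 2" using m n by auto
  ultimately have "pd K (n - 1) (n - 1) = 1" by simp
  moreover have "[n - m..<n] = [n - m..<n - 1] @ [n - 1]"
    using m n by (cases n) auto
  moreover have "n - 1 - K ! (n - 2) = n - m" using m by simp
  ultimately show ?thesis
    using omega_char_eq[OF K] omega_char_butlast_eq[OF K assms(2)]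
    unfolding socle_P_omega_def n_def[symmetric] m_def[symmetric] by (simp add: odd_part_def)
qed

text \<open>The subtraction is truncated: an even simple contributes \<open>0 = 0 - 2\<close>.\<close>
lemma omega_char_flat:
  assumes "ascending K" "2 \<le> length K" "K ! (length K - 1) = K ! (length K - 2)"
  shows "omega_char (butlast K) = (last (omega_char K) - 2) # butlast (omega_char K)"
    and "last (omega_char K) \<noteq> 1"
proof -
  define n m where "n = length K" and "m = K ! (n - 1)"
  have K: "kupisch K" using assms(1) by (simp add: ascending_def)
  have n: "3 \<le> n"
    using assms kupisch_nth_ge_2[OF K, of 1] K by (cases "n = 2") (auto simp: kupisch_def n_def)
  have "K ! (n - 2) \<le> Suc (n - 2)" using kupisch_nth_bounds[OF K, of "n - 2"] n by (simp add: n_def)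
  then have m: "2 \<le> m" "K ! (n - 2) = m" "m \<le> n - 1"
    using kupisch_nth_ge_2[OF K, of "n - 1"] assms n by (auto simp: n_def m_def)
  have pd_top: "pd K (n - 1) (n - 1) = Suc (Suc (pd K (n - 1 - m) (n - 1 - m)))"
    using m n by (intro pd_second_syzygy) (auto simp: n_def m_def numeral_2_eq_2 Suc_diff_Suc)
  have "[n - m..<n] = [n - m..<n - 1] @ [n - 1]"
    using m n by (cases n) auto
  then have oc: "omega_char K = map (\<lambda>i. odd_part (pd K i i)) [n - m..<n - 1] @
      [odd_part (Suc (Suc (pd K (n - 1 - m) (n - 1 - m))))]"
    using omega_char_eq[OF K] pd_top by (simp add: socle_P_omega_def n_def m_def)
  have "[n - 1 - m..<n - 1] = (n - 1 - m) # [n - m..<n - 1]"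
    using m by (simp add: upt_conv_Cons Suc_diff_Suc)
  then show "omega_char (butlast K) = (last (omega_char K) - 2) # butlast (omega_char K)"
    using omega_char_butlast_eq[OF K assms(2)] m oc by (simp add: n_def m_def odd_part_def)
  show "last (omega_char K) \<noteq> 1" using oc by (simp add: odd_part_def)
qed

lemma omega_char_butlast:
  assumes "ascending K" "2 \<le> length K"
  shows "omega_char (butlast K) = (if last (omega_char K) = 1 then butlast (omega_char K)
    else (last (omega_char K) - 2) # butlast (omega_char K))"
proof -
  have K: "kupisch K" and "sorted K" using assms(1) by (auto simp: ascending_def)
  then have "K ! (length K - 2) \<le> K ! (length K - 1)" using assms(2) by (intro sorted_nth_mono) auto
  moreover have "K ! (length K - 1) \<le> K ! (length K - 2) + 1"
    using kupisch_nth_Suc[OF K, of "length K - 2"] assms(2) by (simp add: Suc_diff_Suc numeral_2_eq_2)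
  ultimately consider "K ! (length K - 1) = K ! (length K - 2) + 1"
    | "K ! (length K - 1) = K ! (length K - 2)" by linarith
  then show ?thesis
    by cases (use omega_char_rise[OF assms] omega_char_flat[OF assms] in auto)
qed

lemma ascending_omega_char_inj:
  "ascending K \<Longrightarrow> ascending L \<Longrightarrow> omega_char K = omega_char L \<Longrightarrow> K = L"
proof (induction "length K" arbitrary: K L rule: less_induct)
  case less
  have K: "kupisch K" and L: "kupisch L" using less.prems by (auto simp: ascending_def)
  have last_eq: "K ! (length K - 1) = L ! (length L - 1)"
    using length_omega_char[OF K] length_omega_char[OF L] less.prems(3) by simp
  show ?case
  proof (cases "K ! (length K - 1) = 1")
    case True
    then show ?thesis using last_eq kupisch_last_eq_1_iff[OF K] kupisch_last_eq_1_iff[OF L] by simp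
  next
    case False
    have "length M \<noteq> 1" if "kupisch M" "M ! (length M - 1) \<noteq> 1" for M
      using that by (auto simp: kupisch_def)
    then have "length K \<noteq> 1" "length L \<noteq> 1" using False last_eq K L by auto
    then have len: "2 \<le> length K" "2 \<le> length L"
      using kupisch_length_pos[OF K] kupisch_length_pos[OF L] by linarith+
    then have "butlast K = butlast L"
      using less.hyps[of "butlast K" "butlast L"] less.prems omega_char_butlast
        kupisch_butlast[OF K] kupisch_butlast[OF L] by (simp add: ascending_def sorted_butlast)
    moreover have "K = butlast K @ [last K]" "L = butlast L @ [last L]"
      using kupisch_length_pos[OF K] kupisch_length_pos[OF L] by simp_all
    moreover have "last K = last L"
      using kupisch_length_pos[OF K] kupisch_length_pos[OF L] last_eq by (simp add: last_conv_nth)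
    ultimately show ?thesis by metis
  qed
qed

lemma ascent_eqI: "ascending K \<Longrightarrow> omega_char K = z \<Longrightarrow> ascent z = K"
  unfolding ascent_def using ascending_omega_char_inj by blast

section \<open>The ascent algebra\<close>

lemma sorted_nth_le_last: "sorted K \<Longrightarrow> x \<in> set K \<Longrightarrow> x \<le> K ! (length K - 1)"
  by (auto simp: in_set_conv_nth intro: sorted_nth_mono)

lemma ascending_snoc:
  assumes "ascending K" shows "ascending (K @ [K ! (length K - 1) + 1])"
proof -
  have K: "kupisch K" "sorted K" using assms by (auto simp: ascending_def)
  then have "1 \<le> K ! (length K - 1)"
    using kupisch_nth_bounds[of K "length K - 1"] kupisch_length_pos[of K] by simp
  then have "kupisch (K @ [K ! (length K - 1) + 1])" using kupisch_snoc[OF K(1)] by simp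
  moreover have "\<forall>x\<in>set K. x \<le> K ! (length K - 1) + 1" using sorted_nth_le_last[OF K(2)] by fastforce
  ultimately show ?thesis using K(2) by (simp add: ascending_def sorted_append)
qed

lemma ascending_append_replicate_last:
  "ascending K \<Longrightarrow> 2 \<le> K ! (length K - 1) \<Longrightarrow> ascending (K @ replicate r (K ! (length K - 1)))"
  using kupisch_append_replicate_last[of K] sorted_nth_le_last[of K]
  by (auto simp: ascending_def sorted_append)

lemma pd_snoc_top:
  fixes K :: "nat list" defines "l \<equiv> K ! (length K - 1)" and "s \<equiv> socle_P_omega K"
  assumes K: "kupisch K" and i: "i < l"
  shows "pd (K @ [l + 1]) (s + Suc i) (length K) = Suc (pd K s (s + i))"
proof -
  have n: "length K = s + l" using kupisch_last_le_length[OF K] by (simp add: s_def l_def socle_P_omega_def)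
  have top: "(K @ [l + 1]) ! length K = l + 1" by simp
  moreover have "length K + 1 - (s + Suc i) = l - i" using n by simp
  ultimately have "ismod (K @ [l + 1]) (s + Suc i) (length K)"
    "length K + 1 - (s + Suc i) \<noteq> (K @ [l + 1]) ! length K"
    using i n by (auto simp: ismod_def)
  from pd_syzygy[OF this(1) _ this(2)]
  have "pd (K @ [l + 1]) (s + Suc i) (length K) = Suc (pd (K @ [l + 1]) s (s + i))"
    using n top by simp
  then show ?thesis using pd_append[of "s + i" K "[l + 1]"] i n by simp
qed

lemma pd_append_replicate_top:
  fixes K :: "nat list" defines "l \<equiv> K ! (length K - 1)" and "s \<equiv> socle_P_omega K"
  assumes K: "kupisch K" and aj: "a \<le> j" "j < l" "Suc (j - a) < l"
  shows "pd (K @ replicate l l) (length K + a) (length K + j) = Suc (Suc (pd K (s + a) (s + j)))"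
proof -
  have n: "length K = s + l" using kupisch_last_le_length[OF K] by (simp add: s_def l_def socle_P_omega_def)
  have tail: "(K @ replicate l l) ! i = l" if "length K - 1 \<le> i" "i < length K + l" for i
    using nth_append_replicate_last[of K i l] that kupisch_length_pos[OF K] by (simp add: l_def)
  have "pd (K @ replicate l l) (length K + a) (length K + j) =
      Suc (Suc (pd (K @ replicate l l) (length K + a - l) (length K + j - l)))"
    using aj n tail[of "length K + j"] tail[of "length K + a - 1"]
    by (intro pd_second_syzygy) auto
  then show ?thesis using pd_append[of "s + j" K] aj n by simp
qed

text \<open>Writing \<open>s\<close> for the socle of \<open>P(\<omega>) = [s, s + |zs|]\<close>: every subquotient of \<open>P(\<omega>)\<close> with
  socle \<open>s + i + 1\<close> has projective dimension \<open>zs ! i\<close>, and every proper submodule \<open>[s, s + j]\<close> has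
  projective dimension \<open>zs ! j - 1\<close>. The invariant survives both steps that build \<open>A(0 # zs)\<close>:
  appending one vertex appends an entry \<open>1\<close>, and appending \<open>|P(\<omega>)|\<close> vertices adds \<open>2\<close> to every entry.\<close>
definition pd_window :: "nat list \<Rightarrow> nat list \<Rightarrow> bool" where
  "pd_window K zs \<longleftrightarrow> ascending K \<and> K ! (length K - 1) = Suc (length zs) \<and>
     (\<forall>i j. i < j \<longrightarrow> j \<le> length zs \<longrightarrow>
        pd K (socle_P_omega K + Suc i) (socle_P_omega K + j) = zs ! i) \<and>
     (\<forall>j < length zs. pd K (socle_P_omega K) (socle_P_omega K + j) = zs ! j - 1)"

lemma pd_window_length: "pd_window K zs \<Longrightarrow> socle_P_omega K + Suc (length zs) = length K"
  using kupisch_last_le_length[of K] by (simp add: pd_window_def ascending_def socle_P_omega_def)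

lemma pd_window_simple:
  assumes "pd_window K zs" "zs \<noteq> []" "k \<le> length zs"
  shows "pd K (socle_P_omega K + k) (socle_P_omega K + k) = (if k = 0 then hd zs - 1 else zs ! (k - 1))"
proof (cases k)
  case (Suc i)
  then have "pd K (socle_P_omega K + Suc i) (socle_P_omega K + k) = zs ! i"
    using assms(1,3) lessI unfolding pd_window_def by blast
  then show ?thesis using Suc by simp
qed (use assms in \<open>auto simp: pd_window_def hd_conv_nth\<close>)

lemma omega_char_pd_window:
  assumes "pd_window K zs" "zs \<noteq> []" "\<forall>z\<in>set zs. odd z"
  shows "omega_char K = 0 # zs"
proof (rule nth_equalityI)
  have K: "kupisch K" using assms(1) by (simp add: pd_window_def ascending_def)
  have oc: "omega_char K = map (\<lambda>i. odd_part (pd K i i)) [socle_P_omega K..<length K]"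
    by (rule omega_char_eq[OF K])
  then show "length (omega_char K) = length (0 # zs)"
    using pd_window_length[OF assms(1)] by simp
  fix k assume "k < length (omega_char K)"
  then have k: "k \<le> length zs" using oc pd_window_length[OF assms(1)] by simp
  moreover have "socle_P_omega K + k < length K" using k pd_window_length[OF assms(1)] by simp
  ultimately have "omega_char K ! k = odd_part (pd K (socle_P_omega K + k) (socle_P_omega K + k))"
    using oc pd_window_length[OF assms(1)] by simp
  moreover have "odd (hd zs)" "k \<noteq> 0 \<Longrightarrow> odd (zs ! (k - 1))"
    using assms(2,3) k by auto
  ultimately show "omega_char K ! k = (0 # zs) ! k"
    using pd_window_simple[OF assms(1,2) k] by (cases k) (auto simp: odd_part_def)
qed

lemma ascent_pd_window:
  assumes "pd_window K zs" "zs \<noteq> []" "\<forall>z\<in>set zs. odd z"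
  shows "ascent (0 # zs) = K"
proof (rule ascent_eqI)
  show "ascending K" using assms(1) unfolding pd_window_def by blast
qed (rule omega_char_pd_window[OF assms])

lemma pd_window_singleton: "pd_window [1] []"
  by (auto simp: pd_window_def ascending_def kupisch_def)

lemma pd_window_snoc:
  assumes W: "pd_window K zs" and pos: "\<forall>z\<in>set zs. 0 < z"
  shows "pd_window (K @ [length zs + 2]) (zs @ [1])"
proof -
  define s l where "s = socle_P_omega K" and "l = Suc (length zs)"
  have K: "ascending K" "K ! (length K - 1) = l" and n: "length K = s + l"
    using W pd_window_length[OF W] by (auto simp: pd_window_def s_def l_def)
  then have K': "ascending (K @ [l + 1])" "socle_P_omega (K @ [l + 1]) = s"
    using ascending_snoc[of K] by (auto simp: socle_P_omega_def nth_append)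
  have old: "pd (K @ [l + 1]) a b = pd K a b" if "b < s + l" for a b
    using pd_append[of b K] that n by simp
  have top: "pd (K @ [l + 1]) (s + Suc i) (s + l) = Suc (pd K s (s + i))" if "i < l" for i
    using pd_snoc_top[of K i] K that n by (simp add: ascending_def s_def)
  have P: "pd K s (s + length zs) = 0" using pd_P_omega[of K] K n by (simp add: ascending_def s_def l_def)
  have "pd (K @ [l + 1]) (s + Suc i) (s + j) = (zs @ [1]) ! i" if "i < j" "j \<le> l" for i j
  proof (cases "j = l")
    case True
    show ?thesis
    proof (cases "i < length zs")
      case True
      then show ?thesis using top[of i] \<open>j = l\<close> W pos by (auto simp: pd_window_def nth_append s_def l_def)
    next
      case False
      then have "i = length zs" using that by (simp add: l_def)
      then show ?thesis using top[of i] \<open>j = l\<close> P by (simp add: l_def)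
    qed
  next
    case False
    then show ?thesis using old[of "s + j"] that W by (auto simp: pd_window_def nth_append s_def l_def)
  qed
  moreover have "pd (K @ [l + 1]) s (s + j) = (zs @ [1]) ! j - 1" if "j < l" for j
    using old[of "s + j"] that W P by (auto simp: pd_window_def nth_append s_def l_def less_Suc_eq)
  ultimately show ?thesis using K' unfolding pd_window_def by (simp add: l_def)
qed

lemma pd_window_repeat:
  assumes W: "pd_window K zs" and ne: "zs \<noteq> []" and pos: "\<forall>z\<in>set zs. 0 < z"
  shows "pd_window (K @ replicate (Suc (length zs)) (Suc (length zs))) (map (\<lambda>z. z + 2) zs)"
proof -
  define s l where "s = socle_P_omega K" and "l = Suc (length zs)"
  have K: "ascending K" "K ! (length K - 1) = l" and n: "length K = s + l"
    using W pd_window_length[OF W] by (auto simp: pd_window_def s_def l_def)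
  have l: "2 \<le> l" using ne by (cases zs) (auto simp: l_def)
  have last: "(K @ replicate l l) ! (length K + l - 1) = l"
    using nth_append_replicate_last[of K "length K + l - 1" l] K l
    by (simp add: ascending_def kupisch_def)
  then have K': "ascending (K @ replicate l l)" "socle_P_omega (K @ replicate l l) = length K"
    using ascending_append_replicate_last[of K l] K l by (simp_all add: socle_P_omega_def)
  have top: "pd (K @ replicate l l) (length K + a) (length K + j) = Suc (Suc (pd K (s + a) (s + j)))"
    if "a \<le> j" "j \<le> length zs" "j - a < length zs" for a j
    using pd_append_replicate_top[of K a j] that K by (simp add: ascending_def s_def l_def)
  have "pd (K @ replicate l l) (length K + Suc i) (length K + j) = zs ! i + 2"
    if "i < j" "j \<le> length zs" for i j
    using top[of "Suc i" j] that W by (simp add: pd_window_def s_def)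
  moreover have "pd (K @ replicate l l) (length K) (length K + j) = zs ! j + 2 - 1"
    if "j < length zs" for j
    using top[of 0 j] that W pos by (simp add: pd_window_def s_def)
  ultimately show ?thesis
    using K' last unfolding pd_window_def by (simp add: l_def)
qed

lemma sorted_rev_map_diff: "sorted (rev xs) \<Longrightarrow> sorted (rev (map (\<lambda>x. x - k) xs))"
  for xs :: "nat list"
  by (simp add: rev_map sorted_map sorted_wrt_mono_rel[of _ "(\<le>)"] diff_le_mono)

lemma odd_decreasing_induct [consumes 2, case_names Nil snoc_1 add_2]:
  fixes cs :: "nat list"
  assumes "\<forall>c\<in>set cs. odd c" "sorted (rev cs)"
    and "P []"
    and "\<And>cs. \<forall>c\<in>set cs. odd c \<Longrightarrow> sorted (rev cs) \<Longrightarrow> P cs \<Longrightarrow> P (cs @ [1])"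
    and "\<And>cs. \<forall>c\<in>set cs. odd c \<Longrightarrow> sorted (rev cs) \<Longrightarrow> cs \<noteq> [] \<Longrightarrow> P cs \<Longrightarrow>
      P (map (\<lambda>c. c + 2) cs)"
  shows "P cs"
  using assms(1,2)
proof (induction "sum_list cs" arbitrary: cs rule: less_induct)
  case less
  show ?case
  proof (cases cs rule: rev_cases)
    case Nil
    then show ?thesis using assms(3) by simp
  next
    case (snoc cs' x)
    show ?thesis
    proof (cases "x = 1")
      case True
      have "sum_list cs' < sum_list cs" "\<forall>c\<in>set cs'. odd c" "sorted (rev cs')"
        using less.prems snoc True by auto
      then show ?thesis using less.hyps assms(4) snoc True by blast
    next
      case False
      have "\<forall>c\<in>set cs. x \<le> c" using less.prems(2) snoc by simp
      moreover have "3 \<le> x" using less.prems(1) snoc False by (cases x) auto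
      ultimately have ge3: "\<forall>c\<in>set cs. 3 \<le> c" by fastforce
      define cs2 where "cs2 = map (\<lambda>c. c - 2) cs"
      have cs: "cs = map (\<lambda>c. c + 2) cs2"
        unfolding cs2_def map_map using ge3 by (intro map_idI[symmetric]) auto
      have "sum_list (map (\<lambda>c. c + 2) cs2) = sum_list cs2 + 2 * length cs2" by (induction cs2) auto
      moreover have ne: "cs2 \<noteq> []" using snoc by (simp add: cs2_def)
      ultimately have "sum_list cs2 < sum_list cs" using cs by simp
      moreover have "\<forall>c\<in>set cs2. odd c" using less.prems(1) ge3 by (auto simp: cs2_def)
      moreover have "sorted (rev cs2)" using sorted_rev_map_diff[OF less.prems(2)] by (simp add: cs2_def)
      ultimately have "P cs2" using less.hyps by blast
      then show ?thesis using assms(5)[of cs2] ne cs \<open>\<forall>c\<in>set cs2. odd c\<close> \<open>sorted (rev cs2)\<close> by simp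
    qed
  qed
qed

lemma pd_window_exists:
  fixes cs :: "nat list"
  shows "\<forall>c\<in>set cs. odd c \<Longrightarrow> sorted (rev cs) \<Longrightarrow> \<exists>K. pd_window K cs"
proof (induction cs rule: odd_decreasing_induct)
  case Nil
  then show ?case using pd_window_singleton by blast
next
  case (snoc_1 cs)
  then obtain K where "pd_window K cs" by blast
  moreover have "\<forall>c\<in>set cs. 0 < c" using snoc_1(1) by (auto intro: odd_pos)
  ultimately show ?case using pd_window_snoc by blast
next
  case (add_2 cs)
  then obtain K where "pd_window K cs" by blast
  moreover have "\<forall>c\<in>set cs. 0 < c" using add_2(1) by (auto intro: odd_pos)
  ultimately show ?case using pd_window_repeat add_2(3) by blast
qed

section \<open>The partial closure\<close>

lemma dclosed_socle_P_omega:
  assumes "kupisch K" shows "dclosed K d (socle_P_omega K)"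
proof -
  have "isproj K (socle_P_omega K) (length K - 1)"
    using kupisch_length_pos[OF assms] kupisch_last_le_length[OF assms]
      kupisch_nth_bounds[OF assms, of "length K - 1"]
    by (auto simp: isproj_def ismod_def socle_P_omega_def)
  then show ?thesis by (auto simp: dclosed_def torsionless_def)
qed

lemma ulen_greatest:
  assumes "kupisch K"
  shows "ulen K d \<le> K ! (length K - 1)"
    and "\<And>i. i < ulen K d \<Longrightarrow> dclosed K d (socle_P_omega K + i)"
    and "\<And>m. m \<le> K ! (length K - 1) \<Longrightarrow> \<forall>i<m. dclosed K d (socle_P_omega K + i) \<Longrightarrow> m \<le> ulen K d"
proof -
  define P where "P = (\<lambda>m. m \<le> K ! (length K - 1) \<and> (\<forall>i<m. dclosed K d (socle_P_omega K + i)))"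
  have ulen: "ulen K d = Greatest P" by (simp add: ulen_def P_def socle_P_omega_def)
  have bound: "\<And>m. P m \<Longrightarrow> m \<le> K ! (length K - 1)" by (simp add: P_def)
  have "P (ulen K d)" unfolding ulen by (rule GreatestI_nat[of P 0, OF _ bound]) (simp add: P_def)
  then show "ulen K d \<le> K ! (length K - 1)" "\<And>i. i < ulen K d \<Longrightarrow> dclosed K d (socle_P_omega K + i)"
    by (simp_all add: P_def)
  show "m \<le> ulen K d" if "m \<le> K ! (length K - 1)" "\<forall>i<m. dclosed K d (socle_P_omega K + i)" for m
    unfolding ulen using that by (intro Greatest_le_nat[OF _ bound]) (simp add: P_def)
qed

lemma ulen_pos: "kupisch K \<Longrightarrow> 1 \<le> ulen K d"
  using ulen_greatest(3)[of K 1 d] dclosed_socle_P_omega[of K d] kupisch_nth_bounds[of K "length K - 1"]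
    kupisch_length_pos[of K] by simp

lemma cliff_len_less: "kupisch K \<Longrightarrow> cliff_len K d < K ! (length K - 1)"
  using ulen_greatest(1)[of K d] ulen_pos[of K d] by (simp add: cliff_len_def)

lemma cliff_len_not_dclosed:
  assumes "kupisch K" "\<not> dclosed K d (socle_P_omega K + 1)"
  shows "cliff_len K d = K ! (length K - 1) - 1"
proof -
  have "ulen K d \<le> 1" using ulen_greatest(2)[OF assms(1), of 1 d] assms(2) by linarith
  then show ?thesis using ulen_pos[OF assms(1), of d] by (simp add: cliff_len_def)
qed

lemma cliff_len_dclosed:
  assumes "kupisch K" "2 \<le> K ! (length K - 1)" "dclosed K d (socle_P_omega K + 1)"
  shows "cliff_len K d + 2 \<le> K ! (length K - 1)"
proof -
  have "2 \<le> ulen K d"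
    using ulen_greatest(3)[OF assms(1) assms(2)] dclosed_socle_P_omega[OF assms(1)] assms(3)
    by (simp add: less_2_cases_iff)
  then show ?thesis using ulen_greatest(1)[OF assms(1), of d] by (simp add: cliff_len_def)
qed

lemma kupisch_Ed: "kupisch K \<Longrightarrow> kupisch (Ed d K)"
  using cliff_len_less[of K d] kupisch_snoc[of K "cliff_len K d + 1"] by (simp add: Ed_def)

lemma kupisch_funpow_Ed: "kupisch K \<Longrightarrow> kupisch ((Ed d ^^ n) K)"
  by (induction n) (simp_all add: kupisch_Ed)

lemma funpow_Ed_append:
  assumes "kupisch K"
  shows "\<exists>R. (Ed d ^^ i) K = K @ R \<and> (\<forall>x\<in>set R. x \<le> cliff_len K d + 1)"
proof (induction i)
  case (Suc i)
  then obtain R where R: "(Ed d ^^ i) K = K @ R" "\<forall>x\<in>set R. x \<le> cliff_len K d + 1" by blast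
  define C where "C = (Ed d ^^ i) K"
  have C: "kupisch C" unfolding C_def by (rule kupisch_funpow_Ed[OF assms])
  have "cliff_len C d + 1 \<le> cliff_len K d + 1"
  proof (cases "R = []")
    case True
    then show ?thesis using R(1) by (simp add: C_def)
  next
    case False
    then have "C ! (length C - 1) = last R"
      unfolding C_def R(1) by (metis last_appendR last_conv_nth append_is_Nil_conv)
    then have "C ! (length C - 1) \<le> cliff_len K d + 1" using R(2) last_in_set[OF False] by simp
    then show ?thesis using cliff_len_less[OF C, of d] by simp
  qed
  moreover have "(Ed d ^^ Suc i) K = (if cliff_len C d = 0 then K @ R else K @ (R @ [cliff_len C d + 1]))"
    using R(1) by (simp add: C_def Ed_def)
  ultimately show ?case using R(2) by (cases "cliff_len C d = 0") auto
qed simp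

lemma funpow_Ed_replicate:
  assumes "kupisch K" "2 \<le> K ! (length K - 1)"
    and "\<forall>j<r. cliff_len (K @ replicate j (K ! (length K - 1))) d + 1 = K ! (length K - 1)"
  shows "(Ed d ^^ r) K = K @ replicate r (K ! (length K - 1))"
  using assms(3)
proof (induction r)
  case (Suc r)
  then have "cliff_len (K @ replicate r (K ! (length K - 1))) d = K ! (length K - 1) - 1" by fastforce
  then show ?case
    using Suc assms(2) by (simp add: Ed_def replicate_append_same[symmetric])
qed simp

lemma cliff_len_long_replicate:
  fixes K :: "nat list" defines "l \<equiv> K ! (length K - 1)"
  assumes K: "kupisch K" and l: "2 \<le> l"
  shows "cliff_len (K @ replicate (d * l + l - 1) l) d + 2 \<le> l"
proof -
  define n C where "n = length K" and "C = K @ replicate (d * l + l - 1) l"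
  have C: "kupisch C" "C ! (length C - 1) = l"
    using kupisch_append_replicate_last[OF K] last_append_replicate_last[of K "d * l + l - 1"]
      kupisch_length_pos[OF K] l
    by (simp_all add: C_def l_def)
  have ln: "l \<le> n" using kupisch_last_le_length[OF K] by (simp add: l_def n_def)
  have v: "socle_P_omega C + 1 = n + d * l" using C l ln by (simp add: socle_P_omega_def C_def n_def)
  have "pd C (n + d * l) (n + d * l) = 2 * d + pd C n n"
    unfolding C_def l_def using K l by (intro pd_append_replicate_simple) (auto simp: l_def n_def)
  moreover have "ismod C (n + d * l) (n + d * l)"
    using kupisch_nth_bounds[OF C(1), of "n + d * l"] l by (auto simp: ismod_def C_def n_def)
  ultimately have "dclosed C d (socle_P_omega C + 1)" unfolding v dclosed_def by auto
  then show ?thesis using cliff_len_dclosed[OF C(1)] C(2) l by (simp add: C_def)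
qed

text \<open>The last Kupisch length never increases, and it cannot stay equal to \<open>l\<close> for
  \<open>(d + 1) l - 1\<close> steps: along the resulting constant tail projective dimension grows by \<open>2\<close> per
  period, so the simple above the socle of \<open>P(\<omega>)\<close> becomes \<open>d\<close>-closed.\<close>
lemma Ed_terminates: "kupisch K \<Longrightarrow> \<exists>T. cliff_len ((Ed d ^^ T) K) d = 0"
proof (induction "K ! (length K - 1)" arbitrary: K rule: less_induct)
  case less
  define l where "l = K ! (length K - 1)"
  show ?case
  proof (cases "cliff_len K d = 0")
    case True
    then show ?thesis by (metis funpow_0)
  next
    case False
    then have l: "2 \<le> l" using cliff_len_less[OF less.prems, of d] by (simp add: l_def)
    let ?P = "\<lambda>j. cliff_len (K @ replicate j l) d + 1 \<noteq> l"
    have "?P (d * l + l - 1)" using cliff_len_long_replicate[OF less.prems, where d = d] l by (simp add: l_def)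
    then obtain j where j: "?P j" "\<forall>j'<j. \<not> ?P j'" using exists_least_iff[of ?P] by blast
    define C where "C = K @ replicate j l"
    have C: "kupisch C" "C ! (length C - 1) = l" "(Ed d ^^ j) K = C"
      using kupisch_append_replicate_last[OF less.prems] last_append_replicate_last[of K j]
        kupisch_length_pos[OF less.prems] funpow_Ed_replicate[OF less.prems, of j d] j(2) l
      by (simp_all add: C_def l_def)
    show ?thesis
    proof (cases "cliff_len C d = 0")
      case True
      then show ?thesis using C(3) by metis
    next
      case False
      have "kupisch (C @ [cliff_len C d + 1])" using kupisch_Ed[OF C(1), of d] False by (simp add: Ed_def)
      moreover have "cliff_len C d + 1 < l" using cliff_len_less[OF C(1), of d] C(2) j(1) by (simp add: C_def)
      ultimately obtain T where "cliff_len ((Ed d ^^ T) (C @ [cliff_len C d + 1])) d = 0"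
        using less.hyps l_def by fastforce
      moreover have "(Ed d ^^ Suc j) K = C @ [cliff_len C d + 1]" using C(3) False by (simp add: Ed_def)
      moreover have "(Ed d ^^ (T + Suc j)) K = (Ed d ^^ T) ((Ed d ^^ Suc j) K)"
        by (simp only: funpow_add comp_def)
      ultimately have "cliff_len ((Ed d ^^ (T + Suc j)) K) d = 0" by simp
      then show ?thesis by blast
    qed
  qed
qed

lemma Cd_funpow:
  assumes "kupisch K"
  obtains T where "Cd d K = (Ed d ^^ T) K" "cliff_len ((Ed d ^^ T) K) d = 0"
proof -
  let ?T = "LEAST T. cliff_len ((Ed d ^^ T) K) d = 0"
  obtain T0 where "cliff_len ((Ed d ^^ T0) K) d = 0" using Ed_terminates[OF assms] by blast
  then have "cliff_len ((Ed d ^^ ?T) K) d = 0" by (rule LeastI)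
  then show thesis using that[of ?T] by (simp add: Cd_def)
qed


lemma kupisch_Cd: "kupisch K \<Longrightarrow> kupisch (Cd d K)"
  using kupisch_funpow_Ed by (metis Cd_funpow)

section \<open>Summits\<close>

lemma nth_le_Max_set: "i < length K \<Longrightarrow> K ! i \<le> Max (set K)"
  by (simp add: Max_ge)

lemma height_eq_Max:
  assumes "kupisch K" shows "height K = Max (set K)"
proof -
  define S where "S = {len a b | a b. ismod K a b}"
  have le: "x \<le> Max (set K)" if "x \<in> S" for x
  proof -
    obtain a b where "x = len a b" "ismod K a b" using \<open>x \<in> S\<close> by (auto simp: S_def)
    moreover from this have "K ! b \<le> Max (set K)" by (intro nth_le_Max_set) (simp add: ismod_def)
    ultimately show ?thesis unfolding ismod_def len_def by linarith
  qed
  obtain b where b: "b < length K" "K ! b = Max (set K)"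
    using Max_in[of "set K"] assms by (auto simp: kupisch_def in_set_conv_nth)
  then have "ismod K (Suc b - K ! b) b" "len (Suc b - K ! b) b = K ! b"
    using kupisch_nth_bounds[OF assms b(1)] by (auto simp: ismod_def len_def)
  then have "Max (set K) \<in> S" unfolding S_def using b(2) by force
  moreover have "finite S" using le by (meson finite_atMost finite_subset atMost_iff subsetI)
  ultimately show ?thesis unfolding height_def S_def[symmetric] using le by (intro Max_eqI) auto
qed

lemma summit_iff:
  assumes K: "kupisch K"
  shows "summit K a b \<longleftrightarrow> b < length K \<and> K ! b = Max (set K) \<and> a = Suc b - Max (set K)"
proof
  assume "summit K a b"
  then have "b < length K" "Suc b - a = Max (set K)" "Suc b - a \<le> K ! b" "a \<le> b"
    by (auto simp: summit_def height_eq_Max[OF K] ismod_def len_def)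
  moreover have "K ! b \<le> Max (set K)" using nth_le_Max_set \<open>b < length K\<close> .
  ultimately show "b < length K \<and> K ! b = Max (set K) \<and> a = Suc b - Max (set K)" by auto
next
  assume b: "b < length K \<and> K ! b = Max (set K) \<and> a = Suc b - Max (set K)"
  then show "summit K a b"
    using kupisch_nth_bounds[OF K, of b] by (auto simp: summit_def height_eq_Max[OF K] ismod_def len_def)
qed

lemma first_summit_iff:
  assumes K: "kupisch K" and h: "2 \<le> Max (set K)"
  shows "first_summit K (a, b) \<longleftrightarrow> summit K a b \<and> K ! (b - 1) + 1 = Max (set K)"
proof (cases "summit K a b")
  case True
  then have b: "b < length K" "a = Suc b - Max (set K)" "Max (set K) \<le> Suc b"
    using summit_iff[OF K] kupisch_nth_bounds[OF K, of b] by auto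
  have "K ! (b - 1) \<le> Max (set K)" using b by (intro nth_le_Max_set) auto
  then show ?thesis using True b h by (auto simp: first_summit_def isproj_def ismod_def)
qed (simp add: first_summit_def)

lemma last_summit_iff:
  assumes K: "kupisch K" and h: "2 \<le> Max (set K)"
  shows "last_summit K (a, b) \<longleftrightarrow> summit K a b \<and> (Suc b < length K \<longrightarrow> K ! Suc b \<noteq> Max (set K))"
proof (cases "summit K a b")
  case True
  then have b: "b < length K" "K ! b = Max (set K)" "a = Suc b - Max (set K)" "Max (set K) \<le> Suc b"
    using summit_iff[OF K] kupisch_nth_bounds[OF K, of b] by auto
  have "K ! Suc b \<le> Max (set K)" if "Suc b < length K" using nth_le_Max_set that .
  then show ?thesis using True b h by (auto simp: last_summit_def isinj_def ismod_def le_antisym)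
qed (simp add: last_summit_def)

section \<open>The algebra \<open>H\<^sub>d(c\<^sub>1, \<dots>, c\<^sub>u)\<close>\<close>

locale H_setting =
  fixes d :: nat and cs :: "nat list"
  assumes odd_d: "odd d" and odd_cs: "\<forall>c\<in>set cs. odd c" and sorted_cs: "sorted (rev cs)"
    and hd_cs_le: "cs \<noteq> [] \<longrightarrow> hd cs \<le> d"
begin

definition zs :: "nat list" where "zs = cs @ [1]"
definition A :: "nat list" where "A = ascent (0 # zs)"
definition h :: nat where "h = length cs + 2"
definition s :: nat where "s = socle_P_omega A"
definition t :: nat where "t = (d - hd zs) div 2"

abbreviation H :: "nat list" where "H \<equiv> Hd d cs"

lemma odd_zs: "\<forall>z\<in>set zs. odd z"
  using odd_cs by (simp add: zs_def)

lemma zs_le_hd: "i < length zs \<Longrightarrow> zs ! i \<le> hd zs"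
proof -
  assume i: "i < length zs"
  have "\<forall>c\<in>set cs. 1 \<le> c" using odd_cs by (auto simp: Suc_le_eq intro: odd_pos)
  then have "sorted (rev zs)" using sorted_cs by (simp add: zs_def sorted_append)
  then show ?thesis using sorted_rev_nth_mono[of zs 0 i] i by (simp add: hd_conv_nth zs_def)
qed

lemma odd_hd_zs: "odd (hd zs)"
  unfolding zs_def using odd_cs by (cases cs) auto

lemma d_eq: "d = hd zs + 2 * t"
proof -
  have "hd zs \<le> d" unfolding zs_def using hd_cs_le odd_d by (cases cs) (auto simp: odd_pos Suc_le_eq)
  moreover note odd_hd_zs
  ultimately show ?thesis using odd_d unfolding t_def by presburger
qed

lemma h_ge_2: "2 \<le> h"
  by (simp add: h_def)

lemma A_window: "pd_window A zs" and A_penultimate: "A ! (length A - 2) = h - 1"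
proof -
  obtain B where B: "pd_window B cs" using pd_window_exists odd_cs sorted_cs by blast
  have "\<forall>c\<in>set cs. 0 < c" using odd_cs by (auto intro: odd_pos)
  then have W: "pd_window (B @ [h]) zs" using pd_window_snoc[OF B] by (simp add: zs_def h_def)
  moreover have A: "A = B @ [h]" using ascent_pd_window[OF W _ odd_zs] by (simp add: A_def zs_def)
  ultimately show "pd_window A zs" by simp
  have "B ! (length B - 1) = h - 1" using B by (simp add: pd_window_def h_def)
  moreover have "length A - 2 = length B - 1" "length B - 1 < length B"
    using B kupisch_length_pos[of B] by (auto simp: A pd_window_def ascending_def)
  ultimately show "A ! (length A - 2) = h - 1" by (simp add: A nth_append)
qed

lemma kupisch_A: "kupisch A"
  using A_window by (simp add: pd_window_def ascending_def)

lemma A_last: "A ! (length A - 1) = h"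
  using A_window by (simp add: pd_window_def zs_def h_def)

lemma length_A: "length A = s + h"
  using pd_window_length[OF A_window] by (simp add: s_def zs_def h_def)

lemma A_nth_le: "i < length A - 1 \<Longrightarrow> A ! i \<le> h - 1"
  using A_window A_penultimate sorted_nth_mono[of A i "length A - 2"]
  by (simp add: pd_window_def ascending_def)

lemma pd_A_window:
  "i < j \<Longrightarrow> j < h \<Longrightarrow> pd A (s + Suc i) (s + j) = zs ! i"
  "j < h - 1 \<Longrightarrow> pd A s (s + j) = zs ! j - 1"
  using A_window by (auto simp: pd_window_def s_def zs_def h_def)

lemma pd_A_simple: "k < h \<Longrightarrow> pd A (s + k) (s + k) = (if k = 0 then hd zs - 1 else zs ! (k - 1))"
  using pd_window_simple[OF A_window] by (simp add: s_def zs_def h_def)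

lemma pd_P_omega_A: "pd A s (s + (h - 1)) = 0"
  using pd_P_omega[OF kupisch_A] length_A h_ge_2 by (simp add: s_def)

lemma nth_append_replicate_h:
  "i < length A + r \<Longrightarrow> (A @ replicate r h) ! i = (if i < length A - 1 then A ! i else h)"
  using nth_append_replicate_last[of A i r] A_last kupisch_length_pos[OF kupisch_A]
  by (auto simp: nth_append)

lemma nth_append_replicate_h_tail:
  "length A - 1 \<le> i \<Longrightarrow> i < length A + r \<Longrightarrow> (A @ replicate r h) ! i = h"
  using nth_append_replicate_h by simp

lemma nth_append_replicate_h_le: "i < length A + r \<Longrightarrow> (A @ replicate r h) ! i \<le> h"
  using nth_append_replicate_h[of i r] A_nth_le[of i] by auto

lemma kupisch_append_replicate_h: "kupisch (A @ replicate r h)"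
  using kupisch_append_replicate_last[OF kupisch_A] A_last h_ge_2 by simp

lemma last_append_replicate_h: "(A @ replicate r h) ! (length A + r - 1) = h"
  using nth_append_replicate_h[of "length A + r - 1" r] length_A h_ge_2 by auto

lemma socle_P_omega_append_replicate_h: "socle_P_omega (A @ replicate r h) = s + r"
  using last_append_replicate_h[of r] length_A by (simp add: socle_P_omega_def)

text \<open>Upper bound for the projective dimension of the modules with socle \<open>s + k\<close> over \<open>A\<close> extended
  by vertices of Kupisch length \<open>h\<close>; every period \<open>h\<close> of the tail adds \<open>2\<close>.\<close>
definition pd_cap :: "nat \<Rightarrow> nat" where
  "pd_cap k = 2 * (k div h) + (if k mod h = 0 then hd zs - 1 else hd zs + 1)"

lemma pd_cap_add_h: "pd_cap (k + h) = pd_cap k + 2"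
  using h_ge_2 by (simp add: pd_cap_def div_add_self2)

lemma pd_A_le_pd_cap:
  assumes "s \<le> a" "a \<le> b" "b < length A"
  shows "pd A a b \<le> pd_cap (a - s)"
proof (cases "a = s")
  case True
  define j where "j = b - s"
  have j: "b = s + j" "j < h" using assms length_A True by (auto simp: j_def)
  have "pd A a b \<le> hd zs - 1"
  proof (cases "j < h - 1")
    case True
    then show ?thesis using pd_A_window(2)[of j] zs_le_hd[of j] j \<open>a = s\<close> by (simp add: zs_def h_def)
  next
    case False
    then have "b = s + (h - 1)" using j by simp
    then show ?thesis using pd_P_omega_A \<open>a = s\<close> by simp
  qed
  then show ?thesis using True by (simp add: pd_cap_def)
next
  case False
  define i where "i = a - s - 1"
  have i: "a = s + Suc i" using assms(1) False by (simp add: i_def)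
  then have "pd A a b = zs ! i" "i < length zs"
    using pd_A_window(1)[of i "b - s"] assms length_A by (auto simp: zs_def h_def)
  then have "pd A a b \<le> hd zs + 1" using zs_le_hd by fastforce
  moreover have "0 < a - s" "a - s < h" using i assms length_A by auto
  ultimately show ?thesis by (simp add: pd_cap_def)
qed

text \<open>The syzygy of a module that crosses from \<open>A\<close> into the tail lies inside \<open>P(\<omega>)\<close> of \<open>A\<close>.\<close>
lemma pd_crossing_le_pd_cap:
  assumes "s \<le> a" "a < length A" "length A \<le> b" "b < length A + r" "b + 1 - a \<le> h"
  shows "pd (A @ replicate r h) a b \<le> pd_cap (a - s)"
proof -
  define G where "G = A @ replicate r h"
  have Gb: "G ! b = h" using nth_append_replicate_h_tail[of b r] assms(3,4) by (simp add: G_def)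
  have a: "s < a" "a - s < h" using assms length_A by auto
  have "pd G a b \<le> Suc (hd zs)"
  proof (cases "b + 1 - a = h")
    case True
    then show ?thesis using pd_projective[of G a b] Gb assms by (simp add: ismod_def G_def)
  next
    case False
    have "pd G a b = Suc (pd G (b + 1 - h) (a - 1))"
      using pd_syzygy[of G a b] Gb assms a False by (simp add: ismod_def G_def)
    also have "pd G (b + 1 - h) (a - 1) = pd A (b + 1 - h) (a - 1)"
      unfolding G_def using assms(2) a by (intro pd_append) simp
    also have "\<dots> = zs ! (b - length A)"
      using pd_A_window(1)[of "b - length A" "a - 1 - s"] assms a False length_A
      by (simp add: Suc_diff_le)
    also have "\<dots> \<le> hd zs"
      using zs_le_hd[of "b - length A"] assms length_A by (simp add: zs_def h_def)
    finally show ?thesis by simp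
  qed
  then show ?thesis using a by (simp add: pd_cap_def G_def)
qed

lemma pd_le_pd_cap:
  "s \<le> a \<Longrightarrow> a \<le> b \<Longrightarrow> b < length A + r \<Longrightarrow> b + 1 - a \<le> h \<Longrightarrow>
    pd (A @ replicate r h) a b \<le> pd_cap (a - s)"
proof (induction a arbitrary: b rule: less_induct)
  case (less a)
  define G where "G = A @ replicate r h"
  show ?case
  proof (cases "a < length A")
    case True
    show ?thesis
    proof (cases "b < length A")
      case True
      then show ?thesis using pd_append[of b A] pd_A_le_pd_cap less.prems by simp
    next
      case False
      then show ?thesis using pd_crossing_le_pd_cap \<open>a < length A\<close> less.prems by simp
    qed
  next
    case False
    note tail = nth_append_replicate_h_tail[where r = r, folded G_def]
    show ?thesis
    proof (cases "b + 1 - a = h")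
      case True
      then show ?thesis using pd_projective[of G a b] tail[of b] less.prems False
        by (simp add: ismod_def G_def)
    next
      case proper: False
      have "pd G a b = Suc (Suc (pd G (a - h) (b - h)))"
        using less.prems False proper length_A tail[of b] tail[of "a - 1"]
        by (intro pd_second_syzygy) (auto simp: G_def)
      moreover have "pd G (a - h) (b - h) \<le> pd_cap (a - h - s)"
        unfolding G_def using less.prems False length_A h_ge_2 by (intro less.IH) auto
      moreover have "pd_cap (a - s) = pd_cap (a - h - s) + 2"
      proof -
        have e: "a - s = (a - h - s) + h" using False length_A by simp
        show ?thesis unfolding e by (rule pd_cap_add_h)
      qed
      ultimately show ?thesis unfolding G_def by linarith
    qed
  qed
qed

lemma pd_cap_less_d:
  assumes "r < h * t" shows "pd_cap (Suc r) < d"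
proof -
  define q m where "q = Suc r div h" and "m = Suc r mod h"
  have r: "Suc r = h * q + m" by (simp add: q_def m_def)
  have "1 \<le> hd zs" using odd_hd_zs by (simp add: Suc_le_eq odd_pos)
  moreover have "if m = 0 then q \<le> t else q < t"
  proof -
    have "h * q + m \<le> h * t" using r assms by linarith
    then show ?thesis
      using h_ge_2 by (auto simp: mult_le_cancel1 mult_less_cancel1 dest: add_less_le_mono[of 0 m])
  qed
  ultimately show ?thesis using d_eq by (auto simp: pd_cap_def q_def[symmetric] m_def[symmetric])
qed

lemma cliff_len_before_threshold:
  assumes "r < h * t" shows "cliff_len (A @ replicate r h) d = h - 1"
proof -
  define G where "G = A @ replicate r h"
  have G: "kupisch G" "G ! (length G - 1) = h" "length G = s + h + r" "socle_P_omega G = s + r"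
    using kupisch_append_replicate_h last_append_replicate_h socle_P_omega_append_replicate_h length_A
    by (simp_all add: G_def)
  define v where "v = s + r + 1"
  have "\<not> isproj G v b" for b
  proof
    assume proj: "isproj G v b"
    then have "b < length G" "Suc b - G ! b = v" by (auto simp: isproj_def ismod_def)
    moreover have "Suc b - G ! b \<le> Suc (length G - 1) - G ! (length G - 1)"
      using kupisch_proj_socle_mono[OF G(1), of b "length G - 1"] \<open>b < length G\<close> by simp
    ultimately show False using G h_ge_2 by (simp add: v_def)
  qed
  moreover have "pd G v b < d" if "ismod G v b" for b
  proof -
    have "b + 1 - v \<le> h" using that nth_append_replicate_h_le[of b r] G(3) length_A
      by (auto simp: ismod_def G_def)
    then have "pd G v b \<le> pd_cap (Suc r)"
      using pd_le_pd_cap[of v b r] that length_A by (auto simp: ismod_def G_def v_def)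
    then show ?thesis using pd_cap_less_d[OF assms] by simp
  qed
  ultimately have "\<not> dclosed G d (socle_P_omega G + 1)"
    unfolding dclosed_def torsionless_def G(4) v_def[symmetric] by (auto simp: not_le[symmetric])
  then show ?thesis using cliff_len_not_dclosed[OF G(1)] G(2) by (simp add: G_def)
qed

lemma cliff_len_at_threshold: "cliff_len (A @ replicate (h * t) h) d + 2 \<le> h"
proof -
  define G where "G = A @ replicate (h * t) h"
  have G: "kupisch G" "G ! (length G - 1) = h" "socle_P_omega G = s + h * t"
    using kupisch_append_replicate_h last_append_replicate_h socle_P_omega_append_replicate_h
    by (simp_all add: G_def)
  define v where "v = s + 1 + t * h"
  have "pd G v v = 2 * t + pd G (s + 1) (s + 1)"
    unfolding G_def v_def using pd_append_replicate_simple[OF kupisch_A, of "s + 1" t "h * t"]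
      A_last h_ge_2 length_A by simp
  also have "pd G (s + 1) (s + 1) = hd zs"
    using pd_append[of "s + 1" A] pd_A_simple[of 1] length_A h_ge_2 by (simp add: G_def zs_def hd_conv_nth)
  finally have "d \<le> pd G v v" using d_eq by simp
  moreover have "ismod G v v"
    using kupisch_nth_bounds[OF G(1), of v] length_A h_ge_2 by (simp add: ismod_def G_def v_def)
  ultimately have "dclosed G d (socle_P_omega G + 1)"
    unfolding dclosed_def G(3) v_def by (auto simp: algebra_simps)
  then show ?thesis using cliff_len_dclosed[OF G(1)] G(2) h_ge_2 by (simp add: G_def)
qed

lemma funpow_Ed_A: "r \<le> h * t \<Longrightarrow> (Ed d ^^ r) A = A @ replicate r h"
  using funpow_Ed_replicate[OF kupisch_A, of r d] A_last h_ge_2 cliff_len_before_threshold by simp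

lemma H_shape:
  obtains R where "H = A @ replicate (h * t) h @ R" "\<forall>x\<in>set R. x < h"
proof -
  obtain T where T: "H = (Ed d ^^ T) A" "cliff_len ((Ed d ^^ T) A) d = 0"
    using Cd_funpow[OF kupisch_A] by (metis Hd_def A_def zs_def)
  have "h * t \<le> T"
  proof (rule ccontr)
    assume "\<not> h * t \<le> T"
    then show False using T(2) funpow_Ed_A[of T] cliff_len_before_threshold[of T] h_ge_2 by simp
  qed
  then have "H = (Ed d ^^ (T - h * t)) (A @ replicate (h * t) h)"
    using T(1) funpow_Ed_A[of "h * t"] funpow_add[of "T - h * t" "h * t" "Ed d"] by simp
  then obtain R where "H = A @ replicate (h * t) h @ R"
    "\<forall>x\<in>set R. x \<le> cliff_len (A @ replicate (h * t) h) d + 1"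
    using funpow_Ed_append[OF kupisch_append_replicate_h] by fastforce
  then show thesis using that cliff_len_at_threshold by fastforce
qed

lemma kupisch_H: "kupisch H"
  unfolding Hd_def using kupisch_Cd[OF kupisch_A] by (simp add: A_def zs_def)

lemma length_H: "length A + h * t \<le> length H"
  by (rule H_shape) simp

lemma H_nth:
  assumes "i < length H"
  shows "H ! i \<le> h" and "H ! i = h \<longleftrightarrow> length A - 1 \<le> i \<and> i < length A + h * t"
proof -
  define G where "G = A @ replicate (h * t) h"
  obtain R where R: "H = G @ R" "\<forall>x\<in>set R. x < h" using H_shape by (auto simp: G_def)
  have "H ! i \<le> h \<and> (H ! i = h \<longleftrightarrow> length A - 1 \<le> i \<and> i < length A + h * t)"
  proof (cases "i < length G")
    case True
    then have "H ! i = G ! i" by (simp add: R(1) nth_append_left)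
    also have "\<dots> = (if i < length A - 1 then A ! i else h)"
      using nth_append_replicate_h[of i "h * t"] True by (simp add: G_def)
    finally have "H ! i = (if i < length A - 1 then A ! i else h)" .
    then show ?thesis using A_nth_le[of i] h_ge_2 True by (auto simp: G_def)
  next
    case False
    then have "H ! i \<in> set R" using R(1) assms by (simp add: nth_append_right)
    then show ?thesis using R(2) False by (fastforce simp: G_def)
  qed
  then show "H ! i \<le> h" "H ! i = h \<longleftrightarrow> length A - 1 \<le> i \<and> i < length A + h * t" by simp_all
qed

lemma H_top: "length A - 1 < length H" "H ! (length A - 1) = h"
proof -
  show "length A - 1 < length H" using length_H kupisch_length_pos[OF kupisch_A] by linarith
  moreover have "length A - 1 < length A + h * t" using kupisch_length_pos[OF kupisch_A] by linarith
  ultimately show "H ! (length A - 1) = h" using H_nth(2) by simp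
qed

lemma Max_set_H: "Max (set H) = h"
proof (rule Max_eqI)
  show "x \<le> h" if "x \<in> set H" for x using that H_nth(1) by (auto simp: in_set_conv_nth)
  show "h \<in> set H" using H_top nth_mem by metis
qed simp

lemma summit_H_iff: "summit H a b \<longleftrightarrow> length A - 1 \<le> b \<and> b < length A + h * t \<and> a = Suc b - h"
  using summit_iff[OF kupisch_H] H_nth(2)[of b] length_H Max_set_H by auto

lemma card_summits_H: "card (summits H) = h * t + 1"
proof -
  have "summits H = (\<lambda>b. (Suc b - h, b)) ` {length A - 1..<length A + h * t}"
    by (auto simp: summits_def summit_H_iff)
  moreover have "inj_on (\<lambda>b. (Suc b - h, b)) {length A - 1..<length A + h * t}"
    by (auto simp: inj_on_def)
  ultimately have "card (summits H) = card {length A - 1..<length A + h * t}"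
    by (simp add: card_image)
  then show ?thesis using kupisch_length_pos[OF kupisch_A] by simp
qed

lemma first_summit_H_iff: "first_summit H p \<longleftrightarrow> p = (s, length A - 1)"
proof -
  have "H ! (length A - 2) = h - 1"
    using H_shape A_penultimate kupisch_length_pos[OF kupisch_A] by (metis nth_append_left diff_less zero_less_numeral)
  moreover have "H ! (b - 1) = h" if "length A \<le> b" "b < length A + h * t" for b
  proof -
    have "b - 1 < length H" "length A - 1 \<le> b - 1" "b - 1 < length A + h * t"
      using that length_H by linarith+
    then show ?thesis using H_nth(2)[of "b - 1"] by simp
  qed
  ultimately have "first_summit H (a, b) \<longleftrightarrow> (a, b) = (s, length A - 1)" for a b
    using first_summit_iff[OF kupisch_H, of a b] Max_set_H h_ge_2 summit_H_iff[of a b] length_A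
    by (cases "b = length A - 1") (auto simp: numeral_2_eq_2)
  then show ?thesis by (cases p) simp
qed

lemma last_summit_H_iff: "last_summit H p \<longleftrightarrow> p = (s + h * t, length A + h * t - 1)"
proof -
  have "last_summit H (a, b) \<longleftrightarrow> (a, b) = (s + h * t, length A + h * t - 1)" for a b
    using last_summit_iff[OF kupisch_H, of a b] Max_set_H h_ge_2 summit_H_iff[of a b]
      H_nth(2)[of "Suc b"] length_A length_H
    by (cases "b = length A + h * t - 1") auto
  then show ?thesis by (cases p) simp
qed

lemma charm_first_summit_H: "charm H s (length A - 1) = 0 # zs"
proof -
  obtain R where "H = A @ replicate (h * t) h @ R" using H_shape by auto
  then have "charm H s (length A - 1) = charm A s (length A - 1)"
    using charm_append[of "length A - 1" A] kupisch_length_pos[OF kupisch_A] by simp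
  also have "\<dots> = omega_char A" by (simp add: omega_char_def s_def socle_P_omega_def)
  finally show ?thesis using omega_char_pd_window[OF A_window _ odd_zs] by (simp add: zs_def)
qed

lemma pd_simple_last_block:
  assumes "k < h"
  shows "pd (A @ replicate (h * t) h) (s + h * t + k) (s + h * t + k) = 2 * t + pd A (s + k) (s + k)"
proof -
  have e: "s + h * t + k = s + k + t * h" by (simp add: mult.commute)
  have "pd (A @ replicate (h * t) h) (s + k + t * h) (s + k + t * h) = 2 * t + pd A (s + k) (s + k)"
    using pd_append_replicate_simple[OF kupisch_A, of "s + k" t "h * t"] pd_append[of "s + k" A]
      A_last h_ge_2 length_A assms by simp
  then show ?thesis unfolding e .
qed

lemma charm_last_summit_H:
  "charm H (s + h * t) (length A + h * t - 1) = 0 # map (\<lambda>z. z + 2 * t) zs"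
proof -
  define G where "G = A @ replicate (h * t) h"
  obtain R where "H = G @ R" using H_shape by (auto simp: G_def)
  then have "charm H (s + h * t) (length A + h * t - 1) = charm G (s + h * t) (length A + h * t - 1)"
    using charm_append[of "length A + h * t - 1" G] length_A h_ge_2 by (simp add: G_def)
  also have "\<dots> = map (\<lambda>i. odd_part (pd G i i)) [s + h * t..<length A + h * t]"
  proof -
    have "pd G (s + h * t) (length A + h * t - 1) = 0"
      using pd_P_omega[OF kupisch_append_replicate_h, of "h * t"] socle_P_omega_append_replicate_h
      by (simp add: G_def)
    moreover have "Suc (length A + h * t - 1) = length A + h * t" using length_A h_ge_2 by simp
    ultimately show ?thesis using charm_pd_zero by metis
  qed
  also have "\<dots> = 0 # map (\<lambda>z. z + 2 * t) zs"
  proof (rule nth_equalityI)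
    show "length (map (\<lambda>i. odd_part (pd G i i)) [s + h * t..<length A + h * t]) =
      length (0 # map (\<lambda>z. z + 2 * t) zs)" using length_A by (simp add: zs_def h_def)
    fix k assume "k < length (map (\<lambda>i. odd_part (pd G i i)) [s + h * t..<length A + h * t])"
    then have k: "k < h" using length_A by simp
    then have nth_k: "map (\<lambda>i. odd_part (pd G i i)) [s + h * t..<length A + h * t] ! k =
      odd_part (2 * t + pd A (s + k) (s + k))"
      using pd_simple_last_block length_A by (simp add: G_def)
    show "map (\<lambda>i. odd_part (pd G i i)) [s + h * t..<length A + h * t] ! k =
      (0 # map (\<lambda>z. z + 2 * t) zs) ! k"
    proof (cases k)
      case 0
      then show ?thesis using nth_k pd_A_simple[OF k] odd_hd_zs odd_pos[OF odd_hd_zs]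
        by (simp add: odd_part_def)
    next
      case (Suc j)
      then have "j < length zs" using k by (simp add: zs_def h_def)
      then show ?thesis using nth_k pd_A_simple[OF k] odd_zs Suc by (simp add: odd_part_def)
    qed
  qed
  finally show ?thesis .
qed

lemma summits_of_H:
  "card (summits H) = h * t + 1 \<and> (\<exists>!p. first_summit H p) \<and> (\<exists>!q. last_summit H q) \<and>
   (\<forall>p. first_summit H p \<longrightarrow> charm H (fst p) (snd p) = 0 # zs) \<and>
   (\<forall>q. last_summit H q \<longrightarrow> charm H (fst q) (snd q) = 0 # map (\<lambda>z. z + 2 * t) zs)"
  using card_summits_H first_summit_H_iff last_summit_H_iff charm_first_summit_H charm_last_summit_H
  by auto

end

theorem theorem3:
  fixes d :: nat and cs :: "nat list"
  assumes "odd d"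
    and "sorted (rev cs)"
    and "\<forall>c\<in>set cs. odd c"
    and "cs \<noteq> [] \<longrightarrow> hd cs \<le> d"
  shows "(cs = [] \<longrightarrow>
            card (summits (Hd d cs)) = d \<and>
            (\<exists>!p. first_summit (Hd d cs) p) \<and> (\<exists>!q. last_summit (Hd d cs) q) \<and>
            (\<forall>p. first_summit (Hd d cs) p \<longrightarrow> charm (Hd d cs) (fst p) (snd p) = [0, 1]) \<and>
            (\<forall>q. last_summit (Hd d cs) q \<longrightarrow> charm (Hd d cs) (fst q) (snd q) = [0, d]))
       \<and> (cs \<noteq> [] \<longrightarrow>
            (let t = (d - hd cs) div 2 in
              2 * t = d - hd cs \<and>
              card (summits (Hd d cs)) = (length cs + 2) * t + 1 \<and>
              (\<exists>!p. first_summit (Hd d cs) p) \<and> (\<exists>!q. last_summit (Hd d cs) q) \<and>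
              (\<forall>p. first_summit (Hd d cs) p \<longrightarrow>
                   charm (Hd d cs) (fst p) (snd p) = 0 # cs @ [1]) \<and>
              (\<forall>q. last_summit (Hd d cs) q \<longrightarrow>
                   charm (Hd d cs) (fst q) (snd q) = 0 # map (\<lambda>c. c + 2 * t) cs @ [1 + 2 * t])))"
proof -
  interpret H_setting d cs using assms by unfold_locales
  show ?thesis
  proof (cases "cs = []")
    case True
    then have zs: "zs = [1]" and "h = 2" unfolding zs_def h_def by simp_all
    moreover have "2 * t + 1 = d" using d_eq zs by simp
    ultimately show ?thesis using summits_of_H True by simp
  next
    case False
    then have "hd zs = hd cs" by (simp add: zs_def)
    then have "t = (d - hd cs) div 2" "2 * t = d - hd cs" using d_eq by (simp_all add: t_def)
    then show ?thesis using summits_of_H False by (simp add: Let_def zs_def h_def)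
  qed
qed

end
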